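(* For each $\beta>1$ and $0<\eta<1/2$ there exists $d_0$ such that for all $d\ge d_0$, with high probability $G_{n,d}$ has $(\beta,\eta)$-expansion.
   Context: $G_{n,d}$ is the uniformly random $d$-regular graph on $\{1,\dots,n\}$ ($n$ even when $d$ is odd); "with high probability" means with probability $1-o(1)$ as $n\to\infty$. For a graph $G=(V,E)$ and $T\subseteq V$, $N(T)$ denotes the set of vertices adjacent to some vertex of $T$. Given $\beta>1$ and $0<\eta<1$, $G$ has $(\beta,\eta)$-expansion if every $T\subset V$ with $|T|\le(1-\eta)|V|/\beta$ satisfies $|T\cup N(T)|\ge\beta|T|$. *)

theory Defs
  imports "HOL-Probability.Probability"
begin

definition simple_graph :: "'a set \<Rightarrow> 'a set set \<Rightarrow> bool" where
  "simple_graph V E \<longleftrightarrow> (\<forall>e\<in>E. e \<subseteq> V \<and> card e = 2)"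

definition degree :: "'a set set \<Rightarrow> 'a \<Rightarrow> nat" where
  "degree E v = card {e\<in>E. v \<in> e}"

definition regular_graph :: "nat \<Rightarrow> 'a set \<Rightarrow> 'a set set \<Rightarrow> bool" where
  "regular_graph d V E \<longleftrightarrow> simple_graph V E \<and> (\<forall>v\<in>V. degree E v = d)"

definition nbhd :: "'a set set \<Rightarrow> 'a set \<Rightarrow> 'a set" where
  "nbhd E T = {v. \<exists>u\<in>T. {u, v} \<in> E}"

definition has_expansion :: "real \<Rightarrow> real \<Rightarrow> 'a set \<Rightarrow> 'a set set \<Rightarrow> bool" where
  "has_expansion \<beta> \<eta> V E \<longleftrightarrow>
     (\<forall>T. T \<subseteq> V \<and> real (card T) \<le> (1 - \<eta>) * real (card V) / \<beta>
          \<longrightarrow> real (card (T \<union> nbhd E T)) \<ge> \<beta> * real (card T))"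

definition regular_graphs :: "nat \<Rightarrow> nat \<Rightarrow> nat set set set" where
  "regular_graphs n d = {E. regular_graph d {1..n} E}"

definition G_nd :: "nat \<Rightarrow> nat \<Rightarrow> nat set set pmf" where
  "G_nd n d = pmf_of_set (regular_graphs n d)"

end

theory Submission
  imports Defs
begin

(* A graph without (\<beta>,\<eta>)-expansion contains a set T with \<beta>|T| \<le> (1-\<eta>)n whose neighbours
   all lie in a set S \<supseteq> T of size \<lfloor>\<beta>|T|\<rfloor>.  Fix T and S, put W = V - S, and let C_k
   (layer k below) be the set of d-regular graphs with exactly k edges between T and W.
   Switching two edges ax, by with a \<in> T, b \<in> W into ab, xy maps C_k into C_(k+1) \<union> C_(k+2);
   a graph in C_k admits about (d|T|)(d|W|) switchings, while a graph in C_(k+1) \<union> C_(k+2) arises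
   from at most (k+2) d |S| of them.  Hence |C_k| \<le> r (|C_(k+1)| + |C_(k+2)|) with
   r = O(k|S| / (d|T||W|)), and iterating q|T| times shows that at most a fraction (C|T|/n)^(q|T|)
   of all d-regular graphs lies in C_0.  For large d this beats the binomial(n,|T|) binomial(n,|S|)
   choices of T and S, so summing over |T| leaves a bad fraction of at most 2/n. *)

definition neighbours :: "'a set set \<Rightarrow> 'a \<Rightarrow> 'a set" where
  "neighbours E v = {u. {v, u} \<in> E}"

lemma simple_graph_edgeD:
  assumes "simple_graph V E" "{u, v} \<in> E"
  shows "u \<noteq> v" "u \<in> V" "v \<in> V"
proof -
  have "{u, v} \<subseteq> V" "card {u, v} = 2" using assms unfolding simple_graph_def by auto
  then show "u \<noteq> v" "u \<in> V" "v \<in> V" by (cases "u = v", auto)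
qed

lemma neighbours_subset: "simple_graph V E \<Longrightarrow> neighbours E v \<subseteq> V"
  unfolding neighbours_def by (auto dest: simple_graph_edgeD(3))

lemma nbhd_subset: "simple_graph V E \<Longrightarrow> nbhd E T \<subseteq> V"
  unfolding nbhd_def by (auto dest: simple_graph_edgeD(3))

lemma finite_neighbours: "simple_graph V E \<Longrightarrow> finite V \<Longrightarrow> finite (neighbours E v)"
  by (rule finite_subset[OF neighbours_subset])

lemma degree_eq_card_neighbours:
  assumes "simple_graph V E"
  shows "degree E v = card (neighbours E v)"
proof -
  have "bij_betw (\<lambda>u. {v, u}) (neighbours E v) {e\<in>E. v \<in> e}"
  proof (rule bij_betwI')
    fix x y assume "x \<in> neighbours E v" "y \<in> neighbours E v"
    then have "v \<noteq> x" "v \<noteq> y" using simple_graph_edgeD[OF assms] unfolding neighbours_def by auto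
    then show "({v, x} = {v, y}) = (x = y)" by (auto simp: doubleton_eq_iff)
  next
    fix e assume e: "e \<in> {e\<in>E. v \<in> e}"
    then have "card e = 2" using assms unfolding simple_graph_def by auto
    then obtain a b where "e = {a, b}" by (meson card_2_iff)
    with e show "\<exists>u\<in>neighbours E v. e = {v, u}" unfolding neighbours_def
      by (auto simp: insert_commute)
  qed (auto simp: neighbours_def)
  then show ?thesis unfolding degree_def by (simp add: bij_betw_same_card)
qed

lemma card_neighbours_regular: "regular_graph d V E \<Longrightarrow> v \<in> V \<Longrightarrow> card (neighbours E v) = d"
  unfolding regular_graph_def using degree_eq_card_neighbours by metis

lemma card_Sigma_neighbours:
  assumes "regular_graph d V E" "finite V" "U \<subseteq> V"
  shows "card (SIGMA u:U. neighbours E u) = d * card U"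
proof -
  have sg: "simple_graph V E" using assms(1) unfolding regular_graph_def by simp
  have "card (SIGMA u:U. neighbours E u) = (\<Sum>u\<in>U. card (neighbours E u))"
    using assms finite_subset finite_neighbours[OF sg] by (intro card_SigmaI) auto
  also have "\<dots> = (\<Sum>u\<in>U. d)"
    by (intro sum.cong refl) (meson assms(1,3) card_neighbours_regular subsetD)
  finally show ?thesis by simp
qed

lemma card_Sigma_Sigma_neighbours_le:
  assumes E: "regular_graph d V E" "finite V" and X: "finite X"
    and f: "\<And>p. p \<in> X \<Longrightarrow> f p \<subseteq> V \<and> card (f p) \<le> c"
  shows "card (SIGMA p:X. SIGMA v:f p. neighbours E v) \<le> card X * c * d"
proof -
  have sg: "simple_graph V E" using E unfolding regular_graph_def by simp
  have "finite (f p)" if "p \<in> X" for p using f[OF that] E(2) finite_subset by blast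
  then have "card (SIGMA p:X. SIGMA v:f p. neighbours E v) = (\<Sum>p\<in>X. card (SIGMA v:f p. neighbours E v))"
    using X finite_neighbours[OF sg E(2)] by (intro card_SigmaI) auto
  also have "\<dots> = (\<Sum>p\<in>X. d * card (f p))"
    using card_Sigma_neighbours[OF E] f by (intro sum.cong) auto
  also have "\<dots> \<le> (\<Sum>p\<in>X. d * c)" using f by (intro sum_mono) auto
  finally show ?thesis by (simp add: ac_simps)
qed

lemma degree_exchange:
  assumes "finite E" "R \<subseteq> E" "N \<inter> E = {}" "finite N"
    and "card {e\<in>R. v \<in> e} = card {e\<in>N. v \<in> e}"
  shows "degree ((E - R) \<union> N) v = degree E v"
proof -
  have split: "{e\<in>(E - R) \<union> N. v \<in> e} = ({e\<in>E. v \<in> e} - {e\<in>R. v \<in> e}) \<union> {e\<in>N. v \<in> e}"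
    by auto
  have "card ({e\<in>(E - R) \<union> N. v \<in> e}) =
        card ({e\<in>E. v \<in> e} - {e\<in>R. v \<in> e}) + card {e\<in>N. v \<in> e}"
    unfolding split using assms(1,3,4) by (intro card_Un_disjoint) auto
  moreover have "card ({e\<in>E. v \<in> e} - {e\<in>R. v \<in> e}) = card {e\<in>E. v \<in> e} - card {e\<in>R. v \<in> e}"
    using assms(1,2) by (intro card_Diff_subset) (auto intro: finite_subset)
  moreover have "card {e\<in>R. v \<in> e} \<le> card {e\<in>E. v \<in> e}"
    using assms(1,2) by (intro card_mono) auto
  ultimately show ?thesis
    using assms(5) unfolding degree_def by linarith
qed

lemma regular_graphs_subset_Pow: "regular_graphs n d \<subseteq> Pow (Pow {1..n})"
  unfolding regular_graphs_def regular_graph_def simple_graph_def by auto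

lemma finite_regular_graphs: "finite (regular_graphs n d)"
  using regular_graphs_subset_Pow by (rule finite_subset) simp

lemma finite_regular_graph_edges: "E \<in> regular_graphs n d \<Longrightarrow> finite E"
  using regular_graphs_subset_Pow by (meson Pow_iff finite_Pow_iff finite_atLeastAtMost finite_subset subsetD)

lemma regular_graphsD: "E \<in> regular_graphs n d \<Longrightarrow> regular_graph d {1..n} E"
  unfolding regular_graphs_def by simp

lemma regular_graphs_simple: "E \<in> regular_graphs n d \<Longrightarrow> simple_graph {1..n} E"
  using regular_graphsD unfolding regular_graph_def by simp

text \<open>Circulant graphs show that \<open>regular_graphs n d\<close> is nonempty when \<open>d < n\<close> and \<open>n d\<close>
  is even; otherwise \<open>G_nd n d\<close> would be \<open>pmf_of_set {}\<close>, about which nothing is known.\<close>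

definition cyclic_offset :: "nat \<Rightarrow> nat \<Rightarrow> nat \<Rightarrow> nat" where
  "cyclic_offset n i j = nat ((int j - int i) mod int n)"

lemma eq_if_dvd_diff:
  assumes "i \<in> {1..n}" "j \<in> {1..n}" "int n dvd (int j - int i)"
  shows "i = j"
proof -
  have "\<bar>int j - int i\<bar> < int n" using assms(1,2) by auto
  then show ?thesis using assms(3) dvd_imp_le_int[of "int j - int i" "int n"]
    by (cases "int j - int i = 0") auto
qed

lemma cyclic_offset_eq_0_iff:
  assumes "n > 0" "i \<in> {1..n}" "j \<in> {1..n}"
  shows "cyclic_offset n i j = 0 \<longleftrightarrow> i = j"
  using assms eq_if_dvd_diff[OF assms(2,3)] unfolding cyclic_offset_def
  by (auto simp: nat_eq_iff dvd_eq_mod_eq_0)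

lemma cyclic_offset_swap:
  assumes "n > 0" "i \<in> {1..n}" "j \<in> {1..n}" "i \<noteq> j"
  shows "cyclic_offset n j i = n - cyclic_offset n i j"
proof -
  have "(int j - int i) mod int n \<noteq> 0"
    using cyclic_offset_eq_0_iff[OF assms(1-3)] assms(4) unfolding cyclic_offset_def by auto
  then have "(int i - int j) mod int n = int n - (int j - int i) mod int n"
    using zmod_zminus1_eq_if[of "int j - int i" "int n"] by simp
  then show ?thesis unfolding cyclic_offset_def using assms(1)
    by (metis nat_diff_distrib' nat_int pos_mod_sign of_nat_0_less_iff pos_mod_bound less_imp_le)
qed

lemma inj_on_cyclic_offset: "n > 0 \<Longrightarrow> inj_on (cyclic_offset n v) {1..n}"
proof (rule inj_onI)
  fix j j' assume "n > 0" "j \<in> {1..n}" "j' \<in> {1..n}" "cyclic_offset n v j = cyclic_offset n v j'"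
  then have "(int j - int v) mod int n = (int j' - int v) mod int n"
    unfolding cyclic_offset_def by (subst eq_nat_nat_iff[symmetric]) auto
  then have "int n dvd (int j - int v) - (int j' - int v)" by (simp add: mod_eq_dvd_iff)
  then show "j = j'" using eq_if_dvd_diff[of j' n j] \<open>j \<in> {1..n}\<close> \<open>j' \<in> {1..n}\<close> by simp
qed

lemma cyclic_offset_surj:
  assumes "n > 0" "v \<in> {1..n}" "\<delta> < n"
  shows "\<exists>j\<in>{1..n}. cyclic_offset n v j = \<delta>"
proof
  define j where "j = (v - 1 + \<delta>) mod n + 1"
  show "j \<in> {1..n}" unfolding j_def using assms by (simp add: Suc_leI)
  have "int j - int v = int ((v - 1 + \<delta>) mod n) - int (v - 1)" unfolding j_def using assms by auto
  then have "(int j - int v) mod int n = (int (v - 1 + \<delta>) - int (v - 1)) mod int n"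
    by (simp add: zmod_int mod_diff_left_eq)
  then show "cyclic_offset n v j = \<delta>" unfolding cyclic_offset_def using assms by simp
qed

definition circulant :: "nat \<Rightarrow> nat set \<Rightarrow> nat set set" where
  "circulant n D = {{i, j} | i j. i \<in> {1..n} \<and> j \<in> {1..n} \<and> cyclic_offset n i j \<in> D}"

lemma neighbours_circulant:
  assumes n: "n > 0" and D: "D \<subseteq> {1..<n}" and sym: "\<And>\<delta>. \<delta> \<in> D \<Longrightarrow> n - \<delta> \<in> D"
    and v: "v \<in> {1..n}"
  shows "neighbours (circulant n D) v = {j \<in> {1..n}. cyclic_offset n v j \<in> D}"
proof safe
  fix j assume "j \<in> neighbours (circulant n D) v"
  then obtain i' j' where e: "{v, j} = {i', j'}" "i' \<in> {1..n}" "j' \<in> {1..n}" "cyclic_offset n i' j' \<in> D"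
    unfolding neighbours_def circulant_def by blast
  then have ne: "i' \<noteq> j'" using cyclic_offset_eq_0_iff[OF n, of i' j'] D by auto
  show "j \<in> {1..n}" using e by (auto simp: doubleton_eq_iff)
  show "cyclic_offset n v j \<in> D"
  proof (cases "v = i'")
    case True
    then show ?thesis using e ne by (auto simp: doubleton_eq_iff)
  next
    case False
    then have "v = j'" "j = i'" using e by (auto simp: doubleton_eq_iff)
    then show ?thesis using cyclic_offset_swap[OF n e(2,3) ne] sym[OF e(4)] by simp
  qed
next
  fix j assume "j \<in> {1..n}" "cyclic_offset n v j \<in> D"
  then show "j \<in> neighbours (circulant n D) v" unfolding neighbours_def circulant_def using v by blast
qed

lemma regular_graph_circulant:
  assumes n: "n > 0" and D: "D \<subseteq> {1..<n}" and sym: "\<And>\<delta>. \<delta> \<in> D \<Longrightarrow> n - \<delta> \<in> D"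
  shows "regular_graph (card D) {1..n} (circulant n D)"
proof -
  have sg: "simple_graph {1..n} (circulant n D)"
    unfolding simple_graph_def circulant_def
  proof safe
    fix i j assume "i \<in> {1..n}" "j \<in> {1..n}" "cyclic_offset n i j \<in> D"
    then show "card {i, j} = 2" using cyclic_offset_eq_0_iff[OF n, of i j] D by auto
  qed
  have "bij_betw (cyclic_offset n v) {j \<in> {1..n}. cyclic_offset n v j \<in> D} D" if v: "v \<in> {1..n}" for v
    unfolding bij_betw_def
  proof
    show "inj_on (cyclic_offset n v) {j \<in> {1..n}. cyclic_offset n v j \<in> D}"
      by (rule inj_on_subset[OF inj_on_cyclic_offset[OF n]]) auto
    show "cyclic_offset n v ` {j \<in> {1..n}. cyclic_offset n v j \<in> D} = D"
    proof safe
      fix \<delta> assume "\<delta> \<in> D"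
      then obtain j where "j \<in> {1..n}" "cyclic_offset n v j = \<delta>" using cyclic_offset_surj[OF n v] D by force
      then show "\<delta> \<in> cyclic_offset n v ` {j \<in> {1..n}. cyclic_offset n v j \<in> D}" using \<open>\<delta> \<in> D\<close> by auto
    qed
  qed
  then have "card (neighbours (circulant n D) v) = card D" if "v \<in> {1..n}" for v
    using neighbours_circulant[OF n D sym that] bij_betw_same_card that by metis
  then show ?thesis unfolding regular_graph_def using sg degree_eq_card_neighbours[OF sg] by simp
qed

lemma regular_graphs_nonempty:
  assumes "d < n" and "even (n * d)"
  shows "regular_graphs n d \<noteq> {}"
proof -
  have n: "n > 0" using assms by auto
  define h where "h = d div 2"
  \<comment> \<open>offsets \<open>\<pm>1, \<dots>, \<pm>h\<close>, plus the antipodal offset \<open>n/2\<close> when \<open>d\<close> is odd\<close>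
  define D where "D = {1..h} \<union> {n-h..n-1} \<union> (if odd d then {n div 2} else {})"
  have h: "2*h < n" using assms unfolding h_def by auto
  have half: "n - n div 2 = n div 2" "h < n div 2" "n div 2 < n" if "odd d"
  proof -
    have "even n" using assms that by simp
    then show "n - n div 2 = n div 2" "h < n div 2" "n div 2 < n"
      using assms that unfolding h_def by presburger+
  qed
  have D: "D \<subseteq> {1..<n}" "\<And>\<delta>. \<delta> \<in> D \<Longrightarrow> n - \<delta> \<in> D"
    unfolding D_def using h half n by (auto split: if_splits)
  moreover have "card D = d"
  proof -
    have "card ({1..h} \<union> {n-h..n-1}) = 2*h" by (subst card_Un_disjoint) (use h in auto)
    moreover have "n div 2 \<notin> {1..h} \<union> {n-h..n-1}" if "odd d" using half[OF that] by auto
    ultimately show ?thesis unfolding D_def by (cases "odd d") (auto simp: h_def)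
  qed
  ultimately have "circulant n D \<in> regular_graphs n d"
    using regular_graph_circulant[OF n D] unfolding regular_graphs_def by simp
  then show ?thesis by auto
qed

lemma two_step_recurrence_bound:
  fixes c :: "nat \<Rightarrow> real"
  assumes rec: "\<And>k. k < K \<Longrightarrow> c k \<le> r * (c (k + 1) + c (k + 2))"
    and bound: "\<And>k. c k \<le> M" and r: "r \<ge> 0" and "k + 2 * m \<le> K"
  shows "c k \<le> (2 * r) ^ m * M"
  using assms(4)
proof (induction m arbitrary: k)
  case 0
  then show ?case using bound by simp
next
  case (Suc m)
  have "c (k + 1) \<le> (2 * r) ^ m * M" "c (k + 2) \<le> (2 * r) ^ m * M" using Suc by auto
  then have "r * (c (k + 1) + c (k + 2)) \<le> r * (2 * ((2 * r) ^ m * M))"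
    using r by (intro mult_left_mono) auto
  moreover have "c k \<le> r * (c (k + 1) + c (k + 2))" using rec Suc.prems by auto
  ultimately show ?case by (simp add: algebra_simps)
qed

locale switching =
  fixes n d :: nat and T W :: "nat set"
  assumes T_subset: "T \<subseteq> {1..n}" and W_subset: "W \<subseteq> {1..n}" and disjoint: "T \<inter> W = {}"
begin

definition cross_edges :: "nat set set \<Rightarrow> (nat \<times> nat) set" where
  "cross_edges E = {(a, b). a \<in> T \<and> b \<in> W \<and> {a, b} \<in> E}"

definition layer :: "nat \<Rightarrow> nat set set set" where
  "layer k = {E \<in> regular_graphs n d. card (cross_edges E) = k}"

definition T_arcs :: "nat set set \<Rightarrow> (nat \<times> nat) set" where
  "T_arcs E = {(a, x). a \<in> T \<and> {a, x} \<in> E \<and> x \<notin> W}"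

definition W_arcs :: "nat set set \<Rightarrow> (nat \<times> nat) set" where
  "W_arcs E = {(b, y). b \<in> W \<and> {b, y} \<in> E \<and> y \<notin> T}"

definition forward_switchings :: "nat set set \<Rightarrow> ((nat \<times> nat) \<times> (nat \<times> nat)) set" where
  "forward_switchings E = {((a, x), (b, y)). (a, x) \<in> T_arcs E \<and> (b, y) \<in> W_arcs E \<and>
     {a, b} \<notin> E \<and> {x, y} \<notin> E \<and> x \<noteq> y}"

definition switch :: "nat set set \<Rightarrow> (nat \<times> nat) \<times> (nat \<times> nat) \<Rightarrow> nat set set" where
  "switch E = (\<lambda>((a, x), (b, y)). (E - {{a, x}, {b, y}}) \<union> {{a, b}, {x, y}})"

text \<open>An overestimate of the switchings that can produce \<open>E\<close>.\<close>

definition backward_switchings :: "nat set set \<Rightarrow> ((nat \<times> nat) \<times> (nat \<times> nat)) set" where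
  "backward_switchings E = {((a, x), (b, y)). (a, b) \<in> cross_edges E \<and> x \<in> {1..n} - W \<and> {x, y} \<in> E}"

lemma finite_cross_edges: "finite (cross_edges E)"
proof -
  have "cross_edges E \<subseteq> T \<times> W" unfolding cross_edges_def by auto
  then show ?thesis using T_subset W_subset by (meson finite_SigmaI finite_atLeastAtMost finite_subset)
qed

lemma finite_T_arcs:
  assumes "E \<in> regular_graphs n d"
  shows "finite (T_arcs E)"
proof (rule finite_subset)
  show "T_arcs E \<subseteq> {1..n} \<times> {1..n}"
    unfolding T_arcs_def using simple_graph_edgeD(2,3)[OF regular_graphs_simple[OF assms]] by blast
qed simp

lemma finite_W_arcs:
  assumes "E \<in> regular_graphs n d"
  shows "finite (W_arcs E)"
proof (rule finite_subset)
  show "W_arcs E \<subseteq> {1..n} \<times> {1..n}"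
    unfolding W_arcs_def using simple_graph_edgeD(2,3)[OF regular_graphs_simple[OF assms]] by blast
qed simp

lemma finite_forward_switchings:
  assumes "E \<in> regular_graphs n d"
  shows "finite (forward_switchings E)"
proof (rule finite_subset)
  show "forward_switchings E \<subseteq> T_arcs E \<times> W_arcs E" unfolding forward_switchings_def by auto
qed (use finite_T_arcs[OF assms] finite_W_arcs[OF assms] in simp)

context
  fixes E a x b y
  assumes E: "E \<in> regular_graphs n d" and fwd: "((a, x), (b, y)) \<in> forward_switchings E"
begin

lemma forward_switching_facts:
  "a \<in> T" "b \<in> W" "x \<notin> W" "y \<notin> T" "{a, x} \<in> E" "{b, y} \<in> E" "{a, b} \<notin> E" "{x, y} \<notin> E"
  "a \<noteq> x" "a \<noteq> y" "a \<noteq> b" "x \<noteq> b" "x \<noteq> y" "b \<noteq> y"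
  "a \<in> {1..n}" "x \<in> {1..n}" "b \<in> {1..n}" "y \<in> {1..n}"
  using fwd simple_graph_edgeD[OF regular_graphs_simple[OF E]] disjoint
  unfolding forward_switchings_def T_arcs_def W_arcs_def by auto

lemma switch_eq: "switch E ((a, x), (b, y)) = (E - {{a, x}, {b, y}}) \<union> {{a, b}, {x, y}}"
  unfolding switch_def by simp

lemma switch_regular: "switch E ((a, x), (b, y)) \<in> regular_graphs n d"
proof -
  note f = forward_switching_facts
  have "simple_graph {1..n} (switch E ((a, x), (b, y)))"
    using regular_graphs_simple[OF E] f unfolding switch_eq simple_graph_def by auto
  moreover have "card {e\<in>{{a, x}, {b, y}}. v \<in> e} = card {e\<in>{{a, b}, {x, y}}. v \<in> e}" for v
    using f by (auto simp: conj_disj_distribR Collect_disj_eq Collect_conv_if doubleton_eq_iff)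
  then have "degree (switch E ((a, x), (b, y))) v = degree E v" for v
    unfolding switch_eq using f finite_regular_graph_edges[OF E] by (intro degree_exchange) auto
  ultimately show ?thesis
    using E unfolding regular_graphs_def regular_graph_def by simp
qed

lemma cross_edges_switch:
  "cross_edges (switch E ((a, x), (b, y))) =
     insert (a, b) (cross_edges E \<union> (if x \<in> T \<and> y \<in> W then {(x, y)} else {}))"
  using forward_switching_facts disjoint unfolding switch_eq cross_edges_def
  by (auto simp: doubleton_eq_iff)

lemma card_cross_edges_switch:
  "card (cross_edges (switch E ((a, x), (b, y)))) \<in> {card (cross_edges E) + 1, card (cross_edges E) + 2}"
proof -
  have "(a, b) \<notin> cross_edges E" "(x, y) \<notin> cross_edges E" "(x, y) \<noteq> (a, b)"
    using forward_switching_facts unfolding cross_edges_def by auto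
  then show ?thesis
    unfolding cross_edges_switch using finite_cross_edges by (auto simp: card_insert_if)
qed

lemma switch_undo: "(switch E ((a, x), (b, y)) - {{a, b}, {x, y}}) \<union> {{a, x}, {b, y}} = E"
  using forward_switching_facts unfolding switch_eq by (auto simp: doubleton_eq_iff)

lemma backward_switchings_switch: "((a, x), (b, y)) \<in> backward_switchings (switch E ((a, x), (b, y)))"
  using forward_switching_facts unfolding switch_eq backward_switchings_def cross_edges_def
  by (auto simp: doubleton_eq_iff)

end

lemma card_T_arcs:
  assumes E: "E \<in> regular_graphs n d"
  shows "card (T_arcs E) + card (cross_edges E) = d * card T"
proof -
  have "(SIGMA a:T. neighbours E a) = T_arcs E \<union> cross_edges E"
    unfolding T_arcs_def cross_edges_def neighbours_def by auto
  moreover have "T_arcs E \<inter> cross_edges E = {}" unfolding T_arcs_def cross_edges_def by auto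
  ultimately show ?thesis
    using card_Sigma_neighbours[OF regular_graphsD[OF E] _ T_subset]
      card_Un_disjoint[OF finite_T_arcs[OF E] finite_cross_edges] by simp
qed

lemma card_W_arcs:
  assumes E: "E \<in> regular_graphs n d"
  shows "card (W_arcs E) + card (cross_edges E) = d * card W"
proof -
  have "(SIGMA b:W. neighbours E b) = W_arcs E \<union> prod.swap ` cross_edges E"
    unfolding W_arcs_def cross_edges_def neighbours_def by (auto simp: insert_commute)
  moreover have "W_arcs E \<inter> prod.swap ` cross_edges E = {}"
    unfolding W_arcs_def cross_edges_def by auto
  ultimately show ?thesis
    using card_Sigma_neighbours[OF regular_graphsD[OF E] _ W_subset]
      card_Un_disjoint[OF finite_W_arcs[OF E] finite_imageI[OF finite_cross_edges]]
    by (simp add: card_image)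
qed

text \<open>A pair of arcs \<open>((a, x), (b, y))\<close> fails to be a forward switching only if \<open>b\<close> is a
  neighbour of \<open>a\<close>, or \<open>y\<close> is \<open>x\<close> or a neighbour of it; either way it is determined by
  \<open>(a, x)\<close> and a walk of length two in the graph.\<close>

lemma arc_pairs_subset:
  fixes E :: "nat set set"
  defines "B1 \<equiv> SIGMA p:T_arcs E. SIGMA b:neighbours E (fst p). neighbours E b"
    and "B2 \<equiv> SIGMA p:T_arcs E. SIGMA y:insert (snd p) (neighbours E (snd p)). neighbours E y"
  shows "T_arcs E \<times> W_arcs E \<subseteq> forward_switchings E \<union> B1 \<union> (\<lambda>(p, (y, b)). (p, (b, y))) ` B2"
proof
  fix z assume z: "z \<in> T_arcs E \<times> W_arcs E"
  then obtain a x b y where ax: "(a, x) \<in> T_arcs E" and bw: "(b, y) \<in> W_arcs E"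
    and z_eq: "z = ((a, x), (b, y))" by auto
  show "z \<in> forward_switchings E \<union> B1 \<union> (\<lambda>(p, (y, b)). (p, (b, y))) ` B2"
  proof (cases "z \<in> forward_switchings E")
    case False
    then have "{a, b} \<in> E \<or> {x, y} \<in> E \<or> x = y"
      using ax bw z_eq unfolding forward_switchings_def by auto
    moreover have "{b, y} \<in> E" using bw unfolding W_arcs_def by auto
    ultimately have "z \<in> B1 \<or> ((a, x), (y, b)) \<in> B2"
      using ax z_eq unfolding B1_def B2_def neighbours_def by (auto simp: insert_commute)
    then show ?thesis using z_eq by force
  qed simp
qed

lemma card_forward_switchings_ge:
  assumes E: "E \<in> regular_graphs n d"
  shows "card (T_arcs E) * card (W_arcs E) \<le> card (forward_switchings E) + card (T_arcs E) * (2 * d^2 + d)"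
proof -
  note reg = regular_graphsD[OF E] and sg = regular_graphs_simple[OF E]
  let ?B1 = "SIGMA p:T_arcs E. SIGMA b:neighbours E (fst p). neighbours E b"
  let ?B2 = "SIGMA p:T_arcs E. SIGMA y:insert (snd p) (neighbours E (snd p)). neighbours E y"
  have fin: "finite ?B1" "finite ?B2"
    using finite_T_arcs[OF E] finite_neighbours[OF sg] by auto
  have arc_ends: "p \<in> T_arcs E \<Longrightarrow> fst p \<in> {1..n} \<and> snd p \<in> {1..n}" for p
    unfolding T_arcs_def using simple_graph_edgeD[OF sg] by auto
  have "card (T_arcs E) * card (W_arcs E)
      \<le> card (forward_switchings E \<union> ?B1 \<union> (\<lambda>(p, (y, b)). (p, (b, y))) ` ?B2)"
    unfolding card_cartesian_product[symmetric]
    by (rule card_mono[OF _ arc_pairs_subset]) (use finite_forward_switchings[OF E] fin in auto)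
  also have "\<dots> \<le> card (forward_switchings E) + card ?B1 + card ((\<lambda>(p, (y, b)). (p, (b, y))) ` ?B2)"
    by (meson card_Un_le add_le_mono order.trans order_refl)
  also have "\<dots> \<le> card (forward_switchings E) + card ?B1 + card ?B2"
    using card_image_le[OF fin(2)] by simp
  also have "card ?B1 \<le> card (T_arcs E) * d * d"
    using arc_ends neighbours_subset[OF sg] card_neighbours_regular[OF reg]
    by (intro card_Sigma_Sigma_neighbours_le[OF reg _ finite_T_arcs[OF E]]) auto
  also have "card ?B2 \<le> card (T_arcs E) * (d + 1) * d"
    using arc_ends neighbours_subset[OF sg] card_neighbours_regular[OF reg] finite_neighbours[OF sg]
    by (intro card_Sigma_Sigma_neighbours_le[OF reg _ finite_T_arcs[OF E]]) (auto simp: card_insert_if)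
  finally show ?thesis by (simp add: algebra_simps power2_eq_square)
qed

lemma card_forward_switchings_layer:
  assumes "E \<in> layer k"
  shows "(real d * card T - k) * (real d * card W - k - (2 * d^2 + d)) \<le> card (forward_switchings E)"
proof -
  have E: "E \<in> regular_graphs n d" and k: "card (cross_edges E) = k"
    using assms unfolding layer_def by auto
  have T: "real (card (T_arcs E)) = real d * card T - k"
    and W: "real (card (W_arcs E)) = real d * card W - k"
    using card_T_arcs[OF E] card_W_arcs[OF E] k by (simp_all flip: of_nat_add of_nat_mult)
  have "real (card (T_arcs E) * card (W_arcs E))
      \<le> real (card (forward_switchings E) + card (T_arcs E) * (2 * d^2 + d))"
    using card_forward_switchings_ge[OF E] by (simp only: of_nat_le_iff)
  then have "real (card (T_arcs E)) * card (W_arcs E)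
      \<le> card (forward_switchings E) + card (T_arcs E) * (2 * real d^2 + d)"
    by simp
  then show ?thesis unfolding T W by (simp add: algebra_simps)
qed

lemma backward_switchings_eq:
  "backward_switchings E =
     (\<lambda>((a, b), (x, y)). ((a, x), (b, y))) ` (cross_edges E \<times> (SIGMA x:{1..n} - W. neighbours E x))"
  unfolding backward_switchings_def neighbours_def by force

lemma card_backward_switchings_le:
  assumes E: "E \<in> regular_graphs n d"
  shows "finite (backward_switchings E)"
    and "card (backward_switchings E) \<le> card (cross_edges E) * (d * card ({1..n} - W))"
proof -
  have fin: "finite (SIGMA x:{1..n} - W. neighbours E x)"
    using finite_neighbours[OF regular_graphs_simple[OF E]] by auto
  then show "finite (backward_switchings E)"
    unfolding backward_switchings_eq using finite_cross_edges by auto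
  have "card (backward_switchings E) \<le> card (cross_edges E \<times> (SIGMA x:{1..n} - W. neighbours E x))"
    unfolding backward_switchings_eq by (rule card_image_le) (use fin finite_cross_edges in auto)
  then show "card (backward_switchings E) \<le> card (cross_edges E) * (d * card ({1..n} - W))"
    using card_Sigma_neighbours[OF regular_graphsD[OF E]] by (simp add: card_cartesian_product)
qed

lemma finite_layer: "finite (layer k)"
  unfolding layer_def using finite_regular_graphs by simp

lemma inj_on_switch:
  "inj_on (\<lambda>(E, \<tau>). (switch E \<tau>, \<tau>)) (SIGMA E:regular_graphs n d. forward_switchings E)"
proof (rule inj_onI)
  fix p1 p2
  assume p1: "p1 \<in> (SIGMA E:regular_graphs n d. forward_switchings E)"
    and p2: "p2 \<in> (SIGMA E:regular_graphs n d. forward_switchings E)"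
    and eq: "(\<lambda>(E, \<tau>). (switch E \<tau>, \<tau>)) p1 = (\<lambda>(E, \<tau>). (switch E \<tau>, \<tau>)) p2"
  obtain E1 a x b y where 1: "p1 = (E1, ((a, x), (b, y)))" by (metis prod.exhaust)
  obtain E2 where 2: "p2 = (E2, ((a, x), (b, y)))" using eq 1 by (cases p2) auto
  have "switch E1 ((a, x), (b, y)) = switch E2 ((a, x), (b, y))" using eq 1 2 by simp
  then have "E1 = E2" using p1 p2 switch_undo unfolding 1 2 by (metis SigmaE2)
  then show "p1 = p2" using 1 2 by simp
qed

lemma switch_image_subset:
  "(\<lambda>(E, \<tau>). (switch E \<tau>, \<tau>)) ` (SIGMA E:layer k. forward_switchings E)
     \<subseteq> (SIGMA E:layer (k + 1) \<union> layer (k + 2). backward_switchings E)"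
proof clarify
  fix E a x b y assume E: "E \<in> layer k" and fwd: "((a, x), (b, y)) \<in> forward_switchings E"
  then have reg: "E \<in> regular_graphs n d" unfolding layer_def by simp
  show "switch E ((a, x), (b, y)) \<in> layer (k + 1) \<union> layer (k + 2)
      \<and> ((a, x), (b, y)) \<in> backward_switchings (switch E ((a, x), (b, y)))"
    using switch_regular[OF reg fwd] card_cross_edges_switch[OF reg fwd]
      backward_switchings_switch[OF reg fwd] E
    unfolding layer_def by auto
qed

lemma card_layer_recurrence:
  assumes F: "\<And>E. E \<in> layer k \<Longrightarrow> F \<le> real (card (forward_switchings E))"
  shows "real (card (layer k)) * F
    \<le> (real (card (layer (k + 1))) + real (card (layer (k + 2)))) * real ((k + 2) * d * card ({1..n} - W))"
proof -
  let ?M = "(k + 2) * d * card ({1..n} - W)"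
  let ?S1 = "SIGMA E:layer k. forward_switchings E"
  let ?S2 = "SIGMA E:layer (k + 1) \<union> layer (k + 2). backward_switchings E"
  have reg: "E \<in> layer j \<Longrightarrow> E \<in> regular_graphs n d" for E j unfolding layer_def by simp
  have "real (card (layer k)) * F \<le> (\<Sum>E\<in>layer k. real (card (forward_switchings E)))"
    using sum_mono[OF F] by simp
  also have "\<dots> = real (card ?S1)"
    using finite_layer finite_forward_switchings[OF reg] by (simp add: card_SigmaI)
  also have "card ?S1 \<le> card ?S2"
  proof (rule card_inj_on_le[OF _ switch_image_subset])
    show "inj_on (\<lambda>(E, \<tau>). (switch E \<tau>, \<tau>)) ?S1"
      by (rule inj_on_subset[OF inj_on_switch]) (auto dest: reg)
    show "finite ?S2" using finite_layer card_backward_switchings_le(1)[OF reg] by auto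
  qed
  also have "card ?S2 = (\<Sum>E\<in>layer (k + 1) \<union> layer (k + 2). card (backward_switchings E))"
    using finite_layer card_backward_switchings_le(1)[OF reg] by (auto intro: card_SigmaI)
  also have "\<dots> \<le> (\<Sum>E\<in>layer (k + 1) \<union> layer (k + 2). ?M)"
  proof (rule sum_mono)
    fix E assume E: "E \<in> layer (k + 1) \<union> layer (k + 2)"
    then have "card (cross_edges E) \<le> k + 2" unfolding layer_def by auto
    then show "card (backward_switchings E) \<le> ?M"
      using card_backward_switchings_le(2)[OF reg] E
      by (metis (no_types, lifting) Un_iff mult.assoc mult_le_mono1 order_trans)
  qed
  also have "\<dots> = card (layer (k + 1) \<union> layer (k + 2)) * ?M" by simp
  also have "\<dots> \<le> (card (layer (k + 1)) + card (layer (k + 2))) * ?M"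
    by (intro mult_right_mono card_Un_le) simp
  finally show ?thesis by (simp flip: of_nat_mult of_nat_add)
qed

lemma card_forward_switchings_ge_quarter:
  assumes E: "E \<in> layer k" and k: "k \<le> 2 * m"
    and T: "4 * real m \<le> real d * card T" and W: "4 * real m \<le> real d * card W"
    and W_large: "8 * real d + 4 \<le> card W"
  shows "(real d * card T / 2) * (real d * card W / 4) \<le> card (forward_switchings E)"
proof -
  have "real d * (8 * real d + 4) \<le> real d * card W" using W_large by (intro mult_left_mono) auto
  then have "real d * card T / 2 \<le> real d * card T - k"
    and "real d * card W / 4 \<le> real d * card W - k - (2 * d^2 + d)"
    using T W k by (auto simp: algebra_simps power2_eq_square)
  then have "(real d * card T / 2) * (real d * card W / 4)
      \<le> (real d * card T - k) * (real d * card W - k - (2 * d^2 + d))"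
    by (intro mult_mono) auto
  also have "\<dots> \<le> card (forward_switchings E)" by (rule card_forward_switchings_layer[OF E])
  finally show ?thesis .
qed

lemma card_layer_0_le:
  assumes d: "d > 0" and T: "card T > 0" and W: "card W > 0"
    and T_large: "4 * real m \<le> real d * card T" and W_large: "4 * real m \<le> real d * card W"
    and W_larger: "8 * real d + 4 \<le> card W"
  shows "real (card (layer 0))
    \<le> (16 * (2 * m + 1) * card ({1..n} - W) / (d * card T * card W)) ^ m * card (regular_graphs n d)"
proof -
  define F where "F = (real d * card T / 2) * (real d * card W / 4)"
  define r where "r = (2 * m + 1) * d * card ({1..n} - W) / F"
  have F: "F > 0" unfolding F_def using d T W by auto
  have "real (card (layer k)) \<le> r * (real (card (layer (k + 1))) + real (card (layer (k + 2))))"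
    if k: "k < 2 * m" for k
  proof -
    have "real (card (layer k)) * F
      \<le> (real (card (layer (k + 1))) + real (card (layer (k + 2)))) * real ((k + 2) * d * card ({1..n} - W))"
      using card_forward_switchings_ge_quarter[OF _ _ T_large W_large W_larger] k
      unfolding F_def by (intro card_layer_recurrence) auto
    also have "\<dots> \<le> (real (card (layer (k + 1))) + real (card (layer (k + 2)))) * real ((2 * m + 1) * d * card ({1..n} - W))"
      using k by (intro mult_left_mono of_nat_mono mult_le_mono1) auto
    finally show ?thesis using F unfolding r_def by (simp add: field_simps)
  qed
  moreover have "real (card (layer k)) \<le> card (regular_graphs n d)" for k
    unfolding layer_def using finite_regular_graphs by (simp add: card_mono)
  ultimately have "real (card (layer 0)) \<le> (2 * r) ^ m * card (regular_graphs n d)"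
    using F by (intro two_step_recurrence_bound[where K = "2 * m"]) (auto simp: r_def)
  also have "2 * r = 16 * (2 * m + 1) * card ({1..n} - W) / (d * card T * card W)"
    unfolding r_def F_def using d T W by (simp add: field_simps)
  finally show ?thesis .
qed

lemma layer_0_eq: "layer 0 = {E \<in> regular_graphs n d. nbhd E T \<subseteq> {1..n} - W}"
proof -
  have "nbhd E T \<subseteq> {1..n}" if "E \<in> regular_graphs n d" for E
    using nbhd_subset[OF regular_graphs_simple[OF that]] .
  then show ?thesis using finite_cross_edges unfolding layer_def cross_edges_def nbhd_def by auto
qed

end

lemma pow_div_fact_le_exp: "real k ^ k / fact k \<le> exp (real k)"
proof -
  have exp: "(\<lambda>j. real k ^ j / fact j) sums exp (real k)"
    using exp_converges[of "real k"] by (simp add: divide_inverse mult.commute)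
  have "(\<Sum>j\<in>{k}. real k ^ j / fact j) \<le> (\<Sum>j. real k ^ j / fact j)"
    by (rule sum_le_suminf) (use exp sums_summable in auto)
  then show ?thesis using sums_unique[OF exp] by simp
qed

lemma binomial_le_pow_div_fact: "real (n choose k) \<le> real n ^ k / fact k"
proof -
  have "real ((n choose k) * fact k) \<le> real (n ^ k)" by (simp only: of_nat_le_iff binomial_fact_pow)
  then show ?thesis by (simp add: field_simps)
qed

lemma binomial_le_exp_pow:
  assumes "1 \<le> k"
  shows "real (n choose k) \<le> (exp 1 * n / k) ^ k"
proof -
  have "real (n choose k) \<le> (real n / k) ^ k * (real k ^ k / fact k)"
    using binomial_le_pow_div_fact[of n k] assms by (simp add: field_simps power_divide)
  also have "\<dots> \<le> (real n / k) ^ k * exp 1 ^ k"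
    using pow_div_fact_le_exp[of k] by (intro mult_left_mono) (auto simp flip: exp_of_nat_mult)
  finally show ?thesis by (simp add: power_mult_distrib field_simps)
qed

lemma ratio_pow_le_half_pow:
  fixes t n :: nat
  assumes "1 \<le> t" "t \<le> n"
  shows "(real t / (4 * n)) ^ t \<le> (1 / 2) ^ t / n"
proof -
  have "(real t / (4 * n)) ^ t = (1 / 4) ^ t * (real t / n) ^ t" by (simp add: power_divide)
  also have "\<dots> \<le> (1 / 4) ^ t * (real t / n)"
    using assms by (intro mult_left_mono power_decreasing[where n = 1, simplified]) auto
  also have "\<dots> = (real t * (1 / 2) ^ t) * (1 / 2) ^ t / n"
    by (simp add: field_simps flip: power_mult_distrib)
  also have "\<dots> \<le> 1 * (1 / 2) ^ t / n"
  proof -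
    have "real t < 2 ^ t" by (metis of_nat_less_numeral_power_cancel_iff less_exp)
    then show ?thesis by (intro divide_right_mono mult_right_mono) (auto simp: field_simps)
  qed
  finally show ?thesis by simp
qed

lemma binomial_pair_le:
  fixes t s b n :: nat
  assumes t: "1 \<le> t" "t \<le> s" "s \<le> b * t" "s \<le> n"
  shows "real (n choose t) * real (n choose s) \<le> (exp 1 * n / t) ^ ((b + 1) * t)"
proof -
  define X where "X = exp 1 * n / t"
  have X: "X \<ge> 1"
  proof -
    have "real t \<le> real n * 1" using t by simp
    also have "\<dots> \<le> n * exp 1" by (intro mult_left_mono) auto
    finally show ?thesis unfolding X_def using t by (simp add: field_simps)
  qed
  have "real (n choose t) \<le> X ^ t" unfolding X_def using binomial_le_exp_pow t by simp
  moreover have "real (n choose s) \<le> X ^ (b * t)"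
  proof -
    have "real (n choose s) \<le> (exp 1 * n / s) ^ s" using binomial_le_exp_pow t by simp
    also have "\<dots> \<le> X ^ s" unfolding X_def using t by (intro power_mono divide_left_mono) auto
    also have "\<dots> \<le> X ^ (b * t)" using t X by (intro power_increasing) auto
    finally show ?thesis .
  qed
  ultimately have "real (n choose t) * real (n choose s) \<le> X ^ t * X ^ (b * t)"
    by (intro mult_mono) auto
  also have "\<dots> = X ^ ((b + 1) * t)" by (simp add: power_add distrib_right mult.commute)
  finally show ?thesis unfolding X_def .
qed

lemma binomial_product_bound:
  fixes t s b n :: nat and C :: real
  assumes t: "1 \<le> t" "t \<le> s" "s \<le> b * t" "s \<le> n"
    and C: "0 \<le> C" "exp 1 ^ (b + 1) * C \<le> 1 / 4"
  shows "real (n choose t) * real (n choose s) * (C * t / n) ^ ((b + 2) * t) \<le> (1 / 2) ^ t / n"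
proof -
  define X where "X = exp 1 * n / t"
  have "real (n choose t) * real (n choose s) * (C * t / n) ^ ((b + 2) * t)
      \<le> X ^ ((b + 1) * t) * (C * t / n) ^ ((b + 2) * t)"
    unfolding X_def using binomial_pair_le[OF t] C by (intro mult_right_mono) auto
  also have "\<dots> = (X ^ (b + 1) * (C * t / n) ^ (b + 2)) ^ t"
    by (simp only: power_mult power_mult_distrib)
  also have "\<dots> \<le> (real t / (4 * n)) ^ t"
  proof (rule power_mono)
    have "1 \<le> exp (1::real) ^ (b + 1)" by (rule one_le_power) simp
    then have "C \<le> exp 1 ^ (b + 1) * C" using C mult_right_mono[of 1 "exp 1 ^ (b + 1)" C] by simp
    then have "C ^ (b + 2) \<le> C" using C power_decreasing[of 1 "b + 2" C] by simp
    then have "exp 1 ^ (b + 1) * C ^ (b + 2) \<le> 1 / 4"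
      using C by (meson mult_left_mono order.trans exp_ge_zero zero_le_power)
    moreover have "X ^ (b + 1) * (C * t / n) ^ (b + 2) = exp 1 ^ (b + 1) * C ^ (b + 2) * (t / n)"
      unfolding X_def using t by (simp add: power_mult_distrib power_divide field_simps power_add)
    ultimately show "X ^ (b + 1) * (C * t / n) ^ (b + 2) \<le> real t / (4 * n)"
      using mult_right_mono[of _ "1 / 4" "real t / n"] by simp
    show "0 \<le> X ^ (b + 1) * (C * t / n) ^ (b + 2)" unfolding X_def using C by simp
  qed
  also have "\<dots> \<le> (1 / 2) ^ t / n" using ratio_pow_le_half_pow t by simp
  finally show ?thesis .
qed

lemma switching_ratio_le:
  fixes \<beta> \<eta> :: real and q t s w d n :: nat
  assumes pos: "q > 0" "t > 0" "d > 0" "n > 0" "\<eta> > 0" "\<beta> > 0"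
    and s: "real s \<le> \<beta> * t" and w: "\<eta> * n \<le> w"
  shows "real (16 * (2 * (q * t) + 1) * s) / real (d * t * w) \<le> 48 * q * \<beta> * t / (d * \<eta> * n)"
proof -
  have "16 * (2 * m + 1) \<le> 48 * m" if "1 \<le> m" for m :: nat using that by presburger
  moreover have "1 \<le> q * t" using pos by (simp add: Suc_le_eq)
  ultimately have "real (16 * (2 * (q * t) + 1)) \<le> real (48 * (q * t))" by (simp only: of_nat_le_iff)
  then have "real (16 * (2 * (q * t) + 1) * s) \<le> real (48 * (q * t)) * (\<beta> * t)"
    unfolding of_nat_mult[of _ s] using s by (rule mult_mono) auto
  moreover have "real d * t * (\<eta> * n) \<le> real (d * t * w)"
    using mult_left_mono[OF w, of "real d * t"] by simp
  ultimately have "real (16 * (2 * (q * t) + 1) * s) / real (d * t * w)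
      \<le> real (48 * (q * t)) * (\<beta> * t) / (real d * t * (\<eta> * n))"
    using pos by (intro frac_le) auto
  also have "\<dots> = 48 * q * \<beta> * t / (d * \<eta> * n)" using pos by (simp add: field_simps)
  finally show ?thesis .
qed

lemma card_confined_graphs_le:
  fixes \<beta> \<eta> :: real and n d q :: nat and T S :: "nat set"
  assumes \<beta>: "\<beta> > 1" and \<eta>: "0 < \<eta>" "\<eta> < 1" and q: "q > 0"
    and dq: "4 * q \<le> d * \<eta>" and dn: "8 * d + 4 \<le> \<eta> * n"
    and T: "T \<subseteq> {1..n}" "1 \<le> card T" "\<beta> * card T \<le> (1 - \<eta>) * n"
    and S: "S \<subseteq> {1..n}" "T \<subseteq> S" "card S \<le> \<beta> * card T"
  shows "real (card {E \<in> regular_graphs n d. nbhd E T \<subseteq> S})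
    \<le> (48 * q * \<beta> * card T / (d * \<eta> * n)) ^ (q * card T) * card (regular_graphs n d)"
proof -
  interpret switching n d T "{1..n} - S" by unfold_locales (use T S in auto)
  define t where "t = card T"
  define s where "s = card S"
  define w where "w = card ({1..n} - S)"
  have d: "d > 0" using dq q \<eta> by (cases d) auto
  have n: "n > 0" using dn \<eta> by (cases n) auto
  have t: "t > 0" "real t \<le> n" using T(1,2) card_mono[OF _ T(1)] unfolding t_def by auto
  have s: "real s \<le> \<beta> * t" using S unfolding s_def t_def by simp
  have "w = n - s" unfolding w_def s_def using S(1) by (simp add: card_Diff_subset finite_subset)
  moreover have "s \<le> n" unfolding s_def using S(1) card_mono[of "{1..n}" S] by simp
  ultimately have w: "\<eta> * n \<le> w" using s T(3) unfolding t_def by (simp add: of_nat_diff algebra_simps)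
  have W_large: "8 * real d + 4 \<le> w" using dn w by simp
  have "4 * real q * t \<le> d * \<eta> * t" using dq by (intro mult_right_mono) auto
  moreover have "real d * \<eta> * t \<le> d * w"
    using t(2) w \<eta> order.trans[OF mult_left_mono[of t n \<eta>] w] by (simp add: mult.assoc mult_left_mono)
  moreover have "real d * \<eta> * t \<le> real d * t" using \<eta> by (intro mult_right_mono mult_left_le) auto
  ultimately have "4 * real (q * t) \<le> real d * card T" "4 * real (q * t) \<le> real d * card ({1..n} - S)"
    unfolding t_def w_def by auto
  then have "real (card (layer 0))
      \<le> (real (16 * (2 * (q * t) + 1) * s) / real (d * t * w)) ^ (q * t) * card (regular_graphs n d)"
    using card_layer_0_le[of "q * t"] d t W_large S(1) unfolding s_def t_def w_def
    by (simp add: Diff_Diff_Int Int_absorb1)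
  also have "\<dots> \<le> (48 * q * \<beta> * t / (d * \<eta> * n)) ^ (q * t) * card (regular_graphs n d)"
    using switching_ratio_le[OF q t(1) d n \<eta>(1) _ s w] \<beta> by (intro mult_right_mono power_mono) auto
  moreover have "layer 0 = {E \<in> regular_graphs n d. nbhd E T \<subseteq> S}"
    unfolding layer_0_eq using S(1) nbhd_subset[OF regular_graphs_simple] by blast
  ultimately show ?thesis unfolding t_def by simp
qed

lemma non_expanding_witness:
  fixes \<beta> \<eta> :: real
  assumes \<beta>: "\<beta> > 1" and \<eta>: "0 < \<eta>"
    and E: "E \<in> regular_graphs n d" and not_exp: "\<not> has_expansion \<beta> \<eta> {1..n} E"
  obtains T S where "T \<subseteq> {1..n}" "1 \<le> card T" "\<beta> * card T \<le> (1 - \<eta>) * n"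
    and "S \<subseteq> {1..n}" "T \<subseteq> S" "card S = nat \<lfloor>\<beta> * card T\<rfloor>" "nbhd E T \<subseteq> S"
proof -
  obtain T where T: "T \<subseteq> {1..n}" "real (card T) \<le> (1 - \<eta>) * n / \<beta>"
    and small: "real (card (T \<union> nbhd E T)) < \<beta> * card T"
    using not_exp unfolding has_expansion_def by (auto simp: not_le)
  define U where "U = T \<union> nbhd E T"
  define s where "s = nat \<lfloor>\<beta> * card T\<rfloor>"
  have U: "U \<subseteq> {1..n}" unfolding U_def using T(1) nbhd_subset[OF regular_graphs_simple[OF E]] by blast
  have "card U \<le> s" unfolding s_def U_def using small by (intro le_nat_floor) simp
  have T_small: "\<beta> * card T \<le> (1 - \<eta>) * n" using T(2) \<beta> by (simp add: pos_le_divide_eq mult.commute)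
  have "0 \<le> \<eta> * n" using \<eta> by simp
  have "real s \<le> \<beta> * card T" unfolding s_def using \<beta> by (intro of_nat_floor) simp
  moreover have "\<beta> * card T \<le> n"
    using T_small \<open>0 \<le> \<eta> * n\<close> by (simp add: algebra_simps)
  ultimately have "real s \<le> n" by linarith
  then have "s - card U \<le> card ({1..n} - U)" using U by (simp add: card_Diff_subset finite_subset)
  then obtain S' where S': "S' \<subseteq> {1..n} - U" "card S' = s - card U"
    by (meson obtain_subset_with_card_n)
  have "card (U \<union> S') = s"
    using S' \<open>card U \<le> s\<close> U finite_subset[OF S'(1)]
    by (subst card_Un_disjoint) (auto intro: finite_subset)
  moreover have "1 \<le> card T" using small by (cases "card T") auto
  ultimately show ?thesis
    using that[of T "U \<union> S'"] T(1) T_small U S' unfolding s_def U_def by auto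
qed

lemma card_subsets_of_card_le:
  assumes "finite A" "TT \<subseteq> Pow A"
  shows "card {T \<in> TT. card T = t} \<le> card A choose t"
proof -
  have "card {T \<in> TT. card T = t} \<le> card {T. T \<subseteq> A \<and> card T = t}"
    using assms by (intro card_mono) (auto intro: finite_subset[of _ "Pow A"])
  then show ?thesis using n_subsets[OF assms(1)] by simp
qed

lemma sum_over_subsets_by_card_le:
  fixes g :: "nat \<Rightarrow> real"
  assumes A: "finite A" "TT \<subseteq> Pow A" and g: "\<And>t. 0 \<le> g t"
  shows "(\<Sum>T\<in>TT. g (card T)) \<le> (\<Sum>t\<in>card ` TT. real (card A choose t) * g t)"
proof -
  have "finite TT" using A finite_subset by (metis finite_Pow_iff)
  then have "(\<Sum>T\<in>TT. g (card T)) = (\<Sum>t\<in>card ` TT. \<Sum>T\<in>{T \<in> TT. card T = t}. g (card T))"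
    by (rule sum.image_gen)
  also have "\<dots> \<le> (\<Sum>t\<in>card ` TT. real (card A choose t) * g t)"
  proof (rule sum_mono)
    fix t
    have "(\<Sum>T\<in>{T \<in> TT. card T = t}. g (card T)) = real (card {T \<in> TT. card T = t}) * g t" by simp
    also have "\<dots> \<le> real (card A choose t) * g t"
      using card_subsets_of_card_le[OF A] g by (intro mult_right_mono) auto
    finally show "(\<Sum>T\<in>{T \<in> TT. card T = t}. g (card T)) \<le> real (card A choose t) * g t" .
  qed
  finally show ?thesis .
qed

lemma sum_card_confined_graphs_le:
  fixes \<beta> \<eta> :: real and n d q s :: nat and T :: "nat set"
  assumes \<beta>: "\<beta> > 1" and \<eta>: "0 < \<eta>" "\<eta> < 1" and q: "q > 0"
    and dq: "4 * q \<le> d * \<eta>" and dn: "8 * d + 4 \<le> \<eta> * n"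
    and T: "T \<subseteq> {1..n}" "1 \<le> card T" "\<beta> * card T \<le> (1 - \<eta>) * n" and s: "s \<le> \<beta> * card T"
  shows "(\<Sum>S\<in>{S. S \<subseteq> {1..n} \<and> T \<subseteq> S \<and> card S = s}. real (card {E \<in> regular_graphs n d. nbhd E T \<subseteq> S}))
    \<le> real (n choose s) * (48 * q * \<beta> * card T / (d * \<eta> * n)) ^ (q * card T) * card (regular_graphs n d)"
proof -
  let ?SS = "{S. S \<subseteq> {1..n} \<and> T \<subseteq> S \<and> card S = s}"
  let ?B = "(48 * q * \<beta> * card T / (d * \<eta> * n)) ^ (q * card T) * card (regular_graphs n d)"
  have "(\<Sum>S\<in>?SS. real (card {E \<in> regular_graphs n d. nbhd E T \<subseteq> S})) \<le> (\<Sum>S\<in>?SS. ?B)"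
    using s by (intro sum_mono card_confined_graphs_le[OF \<beta> \<eta> q dq dn T]) auto
  also have "\<dots> = real (card ?SS) * ?B" by simp
  also have "\<dots> \<le> real (n choose s) * ?B"
    using card_subsets_of_card_le[of "{1..n}" ?SS s] \<eta> \<beta> by (intro mult_right_mono) auto
  finally show ?thesis by (simp add: mult.assoc)
qed

lemma card_UN_UN_le:
  assumes "finite I" "\<And>i. i \<in> I \<Longrightarrow> finite (J i)"
  shows "card (\<Union>i\<in>I. \<Union>j\<in>J i. A i j) \<le> (\<Sum>i\<in>I. \<Sum>j\<in>J i. card (A i j))"
  using assms by (intro order.trans[OF card_UN_le sum_mono[OF card_UN_le]]) auto

lemma card_non_expanding_le_sum:
  fixes \<beta> \<eta> :: real
  assumes \<beta>: "\<beta> > 1" and \<eta>: "0 < \<eta>"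
  shows "real (card {E \<in> regular_graphs n d. \<not> has_expansion \<beta> \<eta> {1..n} E})
    \<le> (\<Sum>T\<in>{T. T \<subseteq> {1..n} \<and> 1 \<le> card T \<and> \<beta> * card T \<le> (1 - \<eta>) * n}.
          \<Sum>S\<in>{S. S \<subseteq> {1..n} \<and> T \<subseteq> S \<and> card S = nat \<lfloor>\<beta> * card T\<rfloor>}.
            real (card {E \<in> regular_graphs n d. nbhd E T \<subseteq> S}))"
proof -
  let ?TT = "{T. T \<subseteq> {1..n} \<and> 1 \<le> card T \<and> \<beta> * card T \<le> (1 - \<eta>) * n}"
  let ?SS = "\<lambda>T. {S. S \<subseteq> {1..n} \<and> T \<subseteq> S \<and> card S = nat \<lfloor>\<beta> * card T\<rfloor>}"
  let ?Z = "\<lambda>T S. {E \<in> regular_graphs n d. nbhd E T \<subseteq> S}"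
  have fin: "finite ?TT" "finite (?SS T)" for T by (auto intro: finite_subset[of _ "Pow {1..n}"])
  have "{E \<in> regular_graphs n d. \<not> has_expansion \<beta> \<eta> {1..n} E} \<subseteq> (\<Union>T\<in>?TT. \<Union>S\<in>?SS T. ?Z T S)"
  proof
    fix E assume "E \<in> {E \<in> regular_graphs n d. \<not> has_expansion \<beta> \<eta> {1..n} E}"
    then have E: "E \<in> regular_graphs n d" "\<not> has_expansion \<beta> \<eta> {1..n} E" by auto
    obtain T S where "T \<subseteq> {1..n}" "1 \<le> card T" "\<beta> * card T \<le> (1 - \<eta>) * n"
      and "S \<subseteq> {1..n}" "T \<subseteq> S" "card S = nat \<lfloor>\<beta> * card T\<rfloor>" "nbhd E T \<subseteq> S"
      by (rule non_expanding_witness[OF \<beta> \<eta> E])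
    then show "E \<in> (\<Union>T\<in>?TT. \<Union>S\<in>?SS T. ?Z T S)" using E(1) by blast
  qed
  then have "card {E \<in> regular_graphs n d. \<not> has_expansion \<beta> \<eta> {1..n} E} \<le> card (\<Union>T\<in>?TT. \<Union>S\<in>?SS T. ?Z T S)"
    by (rule card_mono[rotated]) (use fin finite_regular_graphs in auto)
  also have "\<dots> \<le> (\<Sum>T\<in>?TT. \<Sum>S\<in>?SS T. card (?Z T S))" using fin by (rule card_UN_UN_le)
  finally show ?thesis by (simp flip: of_nat_sum)
qed

lemma large_degree_bounds:
  fixes \<beta> \<eta> :: real and b d :: nat
  assumes \<beta>: "1 < \<beta>" and \<eta>: "0 < \<eta>" and d: "192 * (b + 2) * \<beta> * exp 1 ^ (b + 1) \<le> d * \<eta>"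
  shows "4 * (b + 2) \<le> d * \<eta>" and "exp 1 ^ (b + 1) * (48 * (b + 2) * \<beta> / (d * \<eta>)) \<le> 1 / 4"
proof -
  have "1 \<le> \<beta> * exp 1 ^ (b + 1)"
    using \<beta> one_le_power[of "exp (1::real)" "b + 1"] mult_mono[of 1 \<beta> 1 "exp 1 ^ (b + 1)"] by simp
  then have "4 * real (b + 2) \<le> (192 * (\<beta> * exp 1 ^ (b + 1))) * (b + 2)"
    using mult_right_mono[of 4 "192 * (\<beta> * exp 1 ^ (b + 1))" "real (b + 2)"] by simp
  then show dq: "4 * (b + 2) \<le> d * \<eta>" using d by (simp add: ac_simps)
  then have "d * \<eta> > 0" by (rule order.strict_trans2[rotated]) simp
  then show "exp 1 ^ (b + 1) * (48 * (b + 2) * \<beta> / (d * \<eta>)) \<le> 1 / 4"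
    using d by (simp add: field_simps)
qed

lemma nat_floor_mult_bounds:
  fixes \<beta> \<eta> :: real and b t n :: nat
  assumes \<beta>: "1 < \<beta>" "\<beta> \<le> b" and \<eta>: "0 < \<eta>" and t: "\<beta> * t \<le> (1 - \<eta>) * n"
  shows "t \<le> nat \<lfloor>\<beta> * t\<rfloor>" "nat \<lfloor>\<beta> * t\<rfloor> \<le> b * t" "nat \<lfloor>\<beta> * t\<rfloor> \<le> n"
proof -
  have floor: "real (nat \<lfloor>\<beta> * t\<rfloor>) \<le> \<beta> * t" using \<beta> by (intro of_nat_floor) simp
  have "0 \<le> \<eta> * n" using \<eta> by simp
  then have "real t \<le> \<beta> * t" "\<beta> * t \<le> real b * t" "\<beta> * t \<le> n"
    using \<beta> t mult_right_mono[of 1 \<beta> "real t"] mult_right_mono[of \<beta> "real b" "real t"]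
    by (auto simp: algebra_simps)
  then have "real (nat \<lfloor>\<beta> * t\<rfloor>) \<le> real (b * t)" "real (nat \<lfloor>\<beta> * t\<rfloor>) \<le> real n"
    using floor unfolding of_nat_mult by linarith+
  then show "nat \<lfloor>\<beta> * t\<rfloor> \<le> b * t" "nat \<lfloor>\<beta> * t\<rfloor> \<le> n" by (simp_all only: of_nat_le_iff)
  show "t \<le> nat \<lfloor>\<beta> * t\<rfloor>" by (rule le_nat_floor) fact
qed

lemma sum_half_powers_le:
  fixes c :: real
  assumes "finite S" "0 \<le> c"
  shows "(\<Sum>t\<in>S. (1 / 2) ^ t * c) \<le> 2 * c"
proof -
  have "(\<Sum>t\<in>S. (1 / 2 :: real) ^ t) \<le> 2" using geometric_sum_less[of "1 / 2 :: real" S] assms by simp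
  then show ?thesis using assms(2) by (simp add: mult_right_mono flip: sum_distrib_right)
qed

lemma card_non_expanding_le:
  fixes \<beta> \<eta> :: real and b n d :: nat
  assumes \<beta>: "1 < \<beta>" "\<beta> \<le> b" and \<eta>: "0 < \<eta>" "\<eta> < 1"
    and d: "192 * (b + 2) * \<beta> * exp 1 ^ (b + 1) \<le> d * \<eta>" and n: "8 * d + 4 \<le> \<eta> * n"
  shows "real (card {E \<in> regular_graphs n d. \<not> has_expansion \<beta> \<eta> {1..n} E})
    \<le> 2 / n * card (regular_graphs n d)"
proof -
  define C where "C = 48 * (b + 2) * \<beta> / (d * \<eta>)"
  define N where "N = real (card (regular_graphs n d))"
  define s where "s t = nat \<lfloor>\<beta> * real t\<rfloor>" for t :: nat
  define TT where "TT = {T. T \<subseteq> {1..n} \<and> 1 \<le> card T \<and> \<beta> * card T \<le> (1 - \<eta>) * n}"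
  define f where "f t = real (n choose s t) * (C * t / n) ^ ((b + 2) * t) * N" for t
  have q: "0 < b + 2" by simp
  note dq = large_degree_bounds(1)[OF \<beta>(1) \<eta>(1) d]
  have C: "0 \<le> C" "exp 1 ^ (b + 1) * C \<le> 1 / 4"
    using large_degree_bounds(2)[OF \<beta>(1) \<eta>(1) d] \<beta> \<eta> unfolding C_def by auto
  have "n > 0" using n \<eta> by (cases n) auto
  have N: "N \<ge> 0" unfolding N_def by simp
  have "real (card {E \<in> regular_graphs n d. \<not> has_expansion \<beta> \<eta> {1..n} E})
      \<le> (\<Sum>T\<in>TT. \<Sum>S\<in>{S. S \<subseteq> {1..n} \<and> T \<subseteq> S \<and> card S = s (card T)}.
            real (card {E \<in> regular_graphs n d. nbhd E T \<subseteq> S}))"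
    using card_non_expanding_le_sum[OF \<beta>(1) \<eta>(1)] unfolding TT_def s_def .
  also have "\<dots> \<le> (\<Sum>T\<in>TT. f (card T))"
  proof (rule sum_mono)
    fix T assume "T \<in> TT"
    then have T: "T \<subseteq> {1..n}" "1 \<le> card T" "\<beta> * card T \<le> (1 - \<eta>) * n" unfolding TT_def by auto
    have "real (s (card T)) \<le> \<beta> * card T" unfolding s_def using \<beta> by (intro of_nat_floor) simp
    from sum_card_confined_graphs_le[OF \<beta>(1) \<eta> q dq n T this]
    show "(\<Sum>S\<in>{S. S \<subseteq> {1..n} \<and> T \<subseteq> S \<and> card S = s (card T)}.
        real (card {E \<in> regular_graphs n d. nbhd E T \<subseteq> S})) \<le> f (card T)"
      unfolding f_def C_def N_def by (simp add: field_simps)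
  qed
  also have "\<dots> \<le> (\<Sum>t\<in>card ` TT. real (n choose t) * f t)"
    using sum_over_subsets_by_card_le[of "{1..n}" TT f] C N unfolding TT_def f_def by auto
  also have "\<dots> \<le> (\<Sum>t\<in>card ` TT. (1 / 2) ^ t * (N / n))"
  proof (rule sum_mono)
    fix t assume "t \<in> card ` TT"
    then have "1 \<le> t" "\<beta> * t \<le> (1 - \<eta>) * n" unfolding TT_def by auto
    then have "real (n choose t) * real (n choose s t) * (C * t / n) ^ ((b + 2) * t) \<le> (1 / 2) ^ t / n"
      using nat_floor_mult_bounds[OF \<beta> \<eta>(1)] C unfolding s_def by (intro binomial_product_bound) auto
    from mult_right_mono[OF this N]
    show "real (n choose t) * f t \<le> (1 / 2) ^ t * (N / n)" unfolding f_def by (simp add: mult.assoc)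
  qed
  also have "\<dots> \<le> 2 * (N / n)"
    using N unfolding TT_def by (intro sum_half_powers_le) (auto intro: finite_subset[of _ "Pow {1..n}"])
  finally show ?thesis unfolding N_def by simp
qed

lemma prob_pmf_of_set_ge:
  fixes c :: real
  assumes A: "finite A" "A \<noteq> {}" and bad: "real (card {x \<in> A. \<not> P x}) \<le> c * card A"
  shows "1 - c \<le> measure_pmf.prob (pmf_of_set A) {x. P x}"
proof -
  have "card A = card ({x \<in> A. P x} \<union> {x \<in> A. \<not> P x})" by (rule arg_cong[where f = card]) auto
  also have "\<dots> = card {x \<in> A. P x} + card {x \<in> A. \<not> P x}" using A(1) by (intro card_Un_disjoint) auto
  finally have split: "real (card {x \<in> A. P x}) + real (card {x \<in> A. \<not> P x}) = real (card A)" by simp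
  have "card A > 0" using A by (simp add: card_gt_0_iff)
  have "1 - c \<le> 1 - real (card {x \<in> A. \<not> P x}) / card A"
    using bad \<open>card A > 0\<close> by (simp add: field_simps)
  also have "\<dots> = real (card {x \<in> A. P x}) / card A"
    using split \<open>card A > 0\<close> by (simp add: field_simps)
  also have "\<dots> = measure_pmf.prob (pmf_of_set A) {x. P x}"
    using measure_pmf_of_set[OF A(2,1), of "{x. P x}"] by (simp add: Int_def)
  finally show ?thesis .
qed

lemma prob_expansion_ge:
  fixes \<beta> \<eta> :: real and b n d :: nat
  assumes \<beta>: "1 < \<beta>" "\<beta> \<le> b" and \<eta>: "0 < \<eta>" "\<eta> < 1"
    and d: "192 * (b + 2) * \<beta> * exp 1 ^ (b + 1) \<le> d * \<eta>" and n: "8 * d + 4 \<le> \<eta> * n"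
    and even: "even (n * d)"
  shows "1 - 2 / n \<le> measure_pmf.prob (G_nd n d) {E. has_expansion \<beta> \<eta> {1..n} E}"
proof -
  have "\<eta> * n \<le> n" using \<eta> by (simp add: mult_left_le_one_le)
  then have "d < n" using n by linarith
  then show ?thesis
    unfolding G_nd_def
    using card_non_expanding_le[OF \<beta> \<eta> d n] finite_regular_graphs regular_graphs_nonempty even
    by (intro prob_pmf_of_set_ge) auto
qed

lemma large_n_bounds:
  fixes \<eta> \<epsilon> :: real and d n :: nat
  assumes "0 < \<eta>" "0 < \<epsilon>" and "nat \<lceil>(8 * d + 4) / \<eta>\<rceil> + nat \<lceil>2 / \<epsilon>\<rceil> \<le> n"
  shows "8 * d + 4 \<le> \<eta> * n" and "2 / n \<le> \<epsilon>"
proof -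
  have "nat \<lceil>(8 * d + 4) / \<eta>\<rceil> \<le> n" "nat \<lceil>2 / \<epsilon>\<rceil> \<le> n" using assms(3) by linarith+
  then have "(8 * d + 4) / \<eta> \<le> n" "2 / \<epsilon> \<le> n" by simp_all
  then have "8 * d + 4 \<le> \<eta> * n" "2 \<le> n * \<epsilon>"
    using assms(1,2) by (simp_all add: pos_divide_le_eq mult.commute)
  moreover have "n > 0" using \<open>2 \<le> n * \<epsilon>\<close> by (cases n) auto
  ultimately show "8 * d + 4 \<le> \<eta> * n" "2 / n \<le> \<epsilon>" by (simp_all add: pos_divide_le_eq mult.commute)
qed

theorem lemma5p3:
  fixes \<beta> \<eta> :: real
  assumes "\<beta> > 1" and "0 < \<eta>" and "\<eta> < 1/2"
  shows "\<exists>d0::nat. \<forall>d\<ge>d0. \<forall>\<epsilon>>0. \<exists>N::nat. \<forall>n\<ge>N. even (n * d) \<longrightarrow>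
           measure_pmf.prob (G_nd n d) {E. has_expansion \<beta> \<eta> {1..n} E} \<ge> 1 - \<epsilon>"
proof -
  define b where "b = nat \<lceil>\<beta>\<rceil>"
  define K where "K = 192 * (b + 2) * \<beta> * exp 1 ^ (b + 1) / \<eta>"
  have \<beta>: "1 < \<beta>" "\<beta> \<le> b" and \<eta>: "0 < \<eta>" "\<eta> < 1"
    using assms unfolding b_def by (auto simp: real_nat_ceiling_ge)
  show ?thesis
  proof (rule exI[of _ "nat \<lceil>K\<rceil>"], intro allI impI)
    fix d :: nat and \<epsilon> :: real
    assume "nat \<lceil>K\<rceil> \<le> d" and \<epsilon>: "\<epsilon> > 0"
    then have d: "192 * (b + 2) * \<beta> * exp 1 ^ (b + 1) \<le> d * \<eta>"
      using \<eta> unfolding K_def by (simp add: pos_divide_le_eq)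
    show "\<exists>N::nat. \<forall>n\<ge>N. even (n * d) \<longrightarrow>
        measure_pmf.prob (G_nd n d) {E. has_expansion \<beta> \<eta> {1..n} E} \<ge> 1 - \<epsilon>"
    proof (rule exI[of _ "nat \<lceil>(8 * d + 4) / \<eta>\<rceil> + nat \<lceil>2 / \<epsilon>\<rceil>"], intro allI impI)
      fix n :: nat assume n_ge: "nat \<lceil>(8 * d + 4) / \<eta>\<rceil> + nat \<lceil>2 / \<epsilon>\<rceil> \<le> n" and even: "even (n * d)"
      note n = large_n_bounds[OF \<eta>(1) \<epsilon> n_ge]
      then show "measure_pmf.prob (G_nd n d) {E. has_expansion \<beta> \<eta> {1..n} E} \<ge> 1 - \<epsilon>"
        using prob_expansion_ge[OF \<beta> \<eta> d n(1) even] by linarith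
    qed
  qed
qed

end
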